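(* Let $G$ be a second countable locally compact abelian group, let $\varLambda\subseteq G$ be uniformly discrete, and let $\mathcal{A}=(A_n)_n$ be a van Hove sequence such that $\varLambda$ has positive density with respect to $\mathcal{A}$, i.e. $\liminf_{n\to\infty}\frac{\mathrm{card}(\varLambda\cap A_n)}{\mathrm{vol}(A_n)}>0$. Put $F_n=\varLambda\cap A_n$. (a) If $\gamma_{\mathrm{count}}$ is any vague cluster point of $(\gamma_{F_n})_n$, then there exist $C\in(0,\infty)$ and a vague cluster point $\gamma_{\mathrm{dens}}$ of $(\gamma_n)_n$ such that $\gamma_{\mathrm{dens}}=C\gamma_{\mathrm{count}}$. (b) If $\gamma_{\mathrm{dens}}$ is any vague cluster point of $(\gamma_n)_n$, then there exist $D\in(0,\infty)$ and a vague cluster point $\gamma_{\mathrm{count}}$ of $(\gamma_{F_n})_n$ such that $\gamma_{\mathrm{count}}=D\gamma_{\mathrm{dens}}$.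
   Context: $\mathrm{vol}$ is Haar measure. $\varLambda$ is uniformly discrete if there is a nonempty open $U\subseteq G$ such that every translate $t+U$ contains at most one point of $\varLambda$. A van Hove sequence is a sequence $(A_n)_n$ of compact sets of positive Haar measure with $\mathrm{vol}(\partial^K A_n)/\mathrm{vol}(A_n)\to0$ for every compact $K$, where $\partial^K A=((A+K)\setminus A^\circ)\cup((\overline{G\setminus A}-K)\cap A)$. For a finite set $F$, $\gamma_F=\frac{1}{\mathrm{card}(F)}\sum_{x,y\in F}\delta_{x-y}$ if $F\ne\emptyset$, $\gamma_\emptyset=0$; and $\gamma_n=\frac{1}{\mathrm{vol}(A_n)}\sum_{x,y\in F_n}\delta_{x-y}$. Cluster points are taken in the vague topology. *)

theory Defs
  imports "HOL-Analysis.Analysis"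
begin

text \<open>Haar measure on a locally compact abelian group: a nonzero Borel measure that is
  translation invariant, finite on compact sets and positive on nonempty open sets.
  (In a second countable locally compact Hausdorff space every Borel measure that is
  finite on compact sets is regular, so no extra regularity clause is needed.)\<close>
definition haar_measure :: "'a::{topological_ab_group_add,t2_space} measure \<Rightarrow> bool" where
  "haar_measure vol \<longleftrightarrow>
     sets vol = sets borel \<and>
     (\<forall>B \<in> sets borel. \<forall>x. emeasure vol ((\<lambda>y. x + y) ` B) = emeasure vol B) \<and>
     (\<forall>K. compact K \<longrightarrow> emeasure vol K < \<infinity>) \<and>
     (\<forall>U. open U \<and> U \<noteq> {} \<longrightarrow> emeasure vol U > 0)"

definition uniformly_discrete :: "'a::{topological_ab_group_add} set \<Rightarrow> bool" where
  "uniformly_discrete L \<longleftrightarrow>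
     (\<exists>U. open U \<and> U \<noteq> {} \<and>
        (\<forall>t. \<forall>x\<in>L. \<forall>y\<in>L. x \<in> (\<lambda>u. t + u) ` U \<and> y \<in> (\<lambda>u. t + u) ` U \<longrightarrow> x = y))"

definition K_boundary :: "'a::topological_ab_group_add set \<Rightarrow> 'a set \<Rightarrow> 'a set" where
  "K_boundary K A =
     ({a + k | a k. a \<in> A \<and> k \<in> K} - interior A) \<union>
     ({z - k | z k. z \<in> closure (UNIV - A) \<and> k \<in> K} \<inter> A)"

definition van_Hove :: "'a::topological_ab_group_add measure \<Rightarrow> (nat \<Rightarrow> 'a set) \<Rightarrow> bool" where
  "van_Hove vol A \<longleftrightarrow>
     (\<forall>n. compact (A n) \<and> emeasure vol (A n) > 0) \<and>
     (\<forall>K. compact K \<longrightarrow>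
        (\<lambda>n. measure vol (K_boundary K (A n)) / measure vol (A n)) \<longlonglongrightarrow> 0)"

text \<open>The finite autocorrelation measure with counting normalisation,
  (1 / card F) * sum over x,y in F of the Dirac measure at x - y (zero if F is empty).\<close>
definition gamma_count :: "'a::topological_ab_group_add set \<Rightarrow> 'a measure" where
  "gamma_count F =
     scale_measure (ennreal (1 / real (card F)))
       (distr (count_space (F \<times> F)) borel (\<lambda>(x, y). x - y))"

definition gamma_dens :: "'a::topological_ab_group_add measure \<Rightarrow> 'a set \<Rightarrow> 'a set \<Rightarrow> 'a measure" where
  "gamma_dens vol A F =
     scale_measure (ennreal (1 / measure vol A))
       (distr (count_space (F \<times> F)) borel (\<lambda>(x, y). x - y))"

definition Cc :: "('a::topological_space \<Rightarrow> real) set" where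
  "Cc = {f. continuous_on UNIV f \<and> compact (closure {x. f x \<noteq> 0})}"

definition radon :: "'a::topological_space measure \<Rightarrow> bool" where
  "radon M \<longleftrightarrow> sets M = sets borel \<and> (\<forall>K. compact K \<longrightarrow> emeasure M K < \<infinity>)"

text \<open>mu is a cluster point of the sequence mus in the vague topology, i.e. every basic
  vague neighbourhood of mu (given by finitely many test functions and an epsilon)
  contains mus n for infinitely many n.\<close>
definition vague_cluster_point :: "(nat \<Rightarrow> 'a::topological_space measure) \<Rightarrow> 'a measure \<Rightarrow> bool" where
  "vague_cluster_point mus mu \<longleftrightarrow>
     radon mu \<and>
     (\<forall>Fs. finite Fs \<and> Fs \<subseteq> Cc \<longrightarrow> (\<forall>\<epsilon>>0. \<forall>N. \<exists>n\<ge>N.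
        \<forall>f\<in>Fs. \<bar>integral\<^sup>L (mus n) f - integral\<^sup>L mu f\<bar> < \<epsilon>))"

end

theory Submission
  imports Defs
begin

(* Uniform discreteness gives an open D, contained in a compact K, whose translates by the
   points of L are pairwise disjoint.  The translates by the points of L \<inter> A lie in
   A + K \<subseteq> A \<union> \<partial>^K A, so card (L \<inter> A) vol D \<le> vol A + vol (\<partial>^K A), and the van Hove
   property bounds the densities c_n = card (L \<inter> A_n) / vol A_n from above; positive density
   bounds them from below.  So c_n eventually lies in a compact interval [a, b] \<subseteq> (0, \<infinity>).
   Writing a vague cluster point as a limit along a proper filter finer than the sequential one
   and refining that filter so that c_n converges to some C \<in> [a, b], the identity
   \<gamma>_n = c_n \<gamma>_{F_n} shows that C times a cluster point of (\<gamma>_{F_n}) is a cluster point of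
   (\<gamma>_n); symmetrically with 1 / c_n. *)

lemma open_translation_group:
  fixes S :: "'a::topological_group_add set"
  assumes "open S"
  shows "open ((+) a ` S)"
proof -
  have "(+) a ` S = (\<lambda>x. - a + x) -` S"
    by (auto simp: add.assoc[symmetric] intro: image_eqI[where x = "- a + _"])
  moreover have "open ((\<lambda>x. - a + x) -` S)"
    using assms by (rule open_vimage) (intro continuous_intros)
  ultimately show ?thesis by simp
qed

lemma open_negations_group:
  fixes S :: "'a::topological_group_add set"
  assumes "open S"
  shows "open (uminus ` S)"
proof -
  have "uminus ` S = uminus -` S" by force
  moreover have "open (uminus -` S)"
    using assms by (rule open_vimage) (intro continuous_intros)
  ultimately show ?thesis by simp
qed

lemma compact_sums_group:
  fixes A K :: "'a::topological_group_add set"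
  assumes "compact A" "compact K"
  shows "compact {a + k | a k. a \<in> A \<and> k \<in> K}"
proof -
  have "{a + k | a k. a \<in> A \<and> k \<in> K} = (\<lambda>p. fst p + snd p) ` (A \<times> K)" by force
  moreover have "compact ((\<lambda>p. fst p + snd p) ` (A \<times> K))"
    using assms by (intro compact_continuous_image compact_Times continuous_intros)
  ultimately show ?thesis by simp
qed

lemma closed_differences_compact:
  fixes S K :: "'a::{topological_group_add, first_countable_topology} set"
  assumes "closed S" "compact K"
  shows "closed {z - k | z k. z \<in> S \<and> k \<in> K}"
  unfolding closed_sequential_limits
proof (intro allI impI, elim conjE)
  fix x l assume "\<forall>n. x n \<in> {z - k | z k. z \<in> S \<and> k \<in> K}" and "x \<longlonglongrightarrow> l"
  then have "\<forall>n. \<exists>z k. x n = z - k \<and> z \<in> S \<and> k \<in> K" by blast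
  then obtain z k where zk: "\<And>n. x n = z n - k n" "\<And>n. z n \<in> S" "\<And>n. k n \<in> K" by metis
  obtain k0 r where "k0 \<in> K" "strict_mono r" "(k \<circ> r) \<longlonglongrightarrow> k0"
    using seq_compactE[OF compact_imp_seq_compact[OF assms(2)], of k] zk(3) by blast
  have "(x \<circ> r) \<longlonglongrightarrow> l"
    using \<open>x \<longlonglongrightarrow> l\<close> \<open>strict_mono r\<close> by (rule LIMSEQ_subseq_LIMSEQ)
  then have "(\<lambda>n. (x \<circ> r) n + (k \<circ> r) n) \<longlonglongrightarrow> l + k0"
    using \<open>(k \<circ> r) \<longlonglongrightarrow> k0\<close> by (rule tendsto_add)
  then have "(z \<circ> r) \<longlonglongrightarrow> l + k0"
    by (simp add: zk(1) comp_def)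
  then have "l + k0 \<in> S"
    using assms(1) zk(2) unfolding closed_sequential_limits by (metis comp_apply)
  with \<open>k0 \<in> K\<close> show "l \<in> {z - k | z k. z \<in> S \<and> k \<in> K}"
    by (intro CollectI exI[of _ "l + k0"] exI[of _ k0]) simp
qed

lemma K_boundary_borel:
  fixes A K :: "'a::{topological_ab_group_add, t2_space, first_countable_topology} set"
  assumes "compact A" "compact K"
  shows "K_boundary K A \<in> sets borel"
proof -
  have "closed {a + k | a k. a \<in> A \<and> k \<in> K}" "closed A"
    using assms by (auto intro: compact_imp_closed compact_sums_group)
  moreover have "closed {z - k | z k. z \<in> closure (UNIV - A) \<and> k \<in> K}"
    using assms(2) by (intro closed_differences_compact) simp_all
  ultimately show ?thesis
    unfolding K_boundary_def by (intro sets.Un sets.Diff sets.Int borel_closed borel_open) auto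
qed

lemma sets_haar_measure:
  "haar_measure vol \<Longrightarrow> sets vol = sets borel"
  by (simp add: haar_measure_def)

lemma emeasure_haar_measure_translation:
  "haar_measure vol \<Longrightarrow> B \<in> sets borel \<Longrightarrow> emeasure vol ((+) x ` B) = emeasure vol B"
  by (simp add: haar_measure_def)

lemma haar_measure_fmeasurable:
  assumes haar: "haar_measure vol" and "B \<in> sets borel" "B \<subseteq> K" "compact K"
  shows "B \<in> fmeasurable vol"
proof -
  have "K \<in> sets vol" "emeasure vol K < \<infinity>"
    using haar \<open>compact K\<close> by (auto simp: haar_measure_def compact_imp_closed)
  then have "K \<in> fmeasurable vol"
    by (rule fmeasurableI)
  with assms(2,3) haar show ?thesis
    by (auto simp: haar_measure_def intro: fmeasurableI2)
qed

lemma haar_measure_pos: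
  assumes haar: "haar_measure vol" and "open D" "D \<noteq> {}" "D \<subseteq> K" "compact K"
  shows "0 < measure vol D"
proof -
  have "D \<in> fmeasurable vol"
    using assms by (auto intro: haar_measure_fmeasurable)
  moreover have "0 < emeasure vol D"
    using haar assms(2,3) by (simp add: haar_measure_def)
  ultimately show ?thesis
    by (simp add: emeasure_eq_measure2)
qed

lemma uniformly_discrete_disjoint_translates:
  fixes L :: "'a::topological_ab_group_add set"
  assumes "uniformly_discrete L"
  obtains V where "open V" "V \<noteq> {}" "disjoint_family_on (\<lambda>x. (+) x ` V) L"
proof -
  obtain U where U: "open U" "U \<noteq> {}"
    and sep: "\<And>t x y. x \<in> L \<Longrightarrow> y \<in> L \<Longrightarrow> x \<in> (+) t ` U \<Longrightarrow> y \<in> (+) t ` U \<Longrightarrow> x = y"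
    using assms unfolding uniformly_discrete_def by blast
  have "disjoint_family_on (\<lambda>x. (+) x ` uminus ` U) L"
    unfolding disjoint_family_on_def
  proof (intro ballI impI equals0I)
    fix x y z assume "x \<in> L" "y \<in> L" "x \<noteq> y" "z \<in> (+) x ` uminus ` U \<inter> (+) y ` uminus ` U"
    then obtain u v where "u \<in> U" "v \<in> U" "z = x - u" "z = y - v" by auto
    then have "x \<in> (+) z ` U" "y \<in> (+) z ` U"
      by (auto intro!: image_eqI simp: algebra_simps)
    with sep \<open>x \<in> L\<close> \<open>y \<in> L\<close> \<open>x \<noteq> y\<close> show False by blast
  qed
  with U show thesis
    by (intro that[of "uminus ` U"] open_negations_group) auto
qed

lemma uniformly_discrete_disjoint_translates_compact:
  fixes L :: "'a::topological_ab_group_add set"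
  assumes lc: "locally_compact_space (euclidean :: 'a topology)" and ud: "uniformly_discrete L"
  obtains D K where "open D" "D \<noteq> {}" "D \<subseteq> K" "compact K" "disjoint_family_on (\<lambda>x. (+) x ` D) L"
proof -
  obtain V where V: "open V" "V \<noteq> {}" and disj: "disjoint_family_on (\<lambda>x. (+) x ` V) L"
    using ud by (rule uniformly_discrete_disjoint_translates)
  then obtain p where "p \<in> V" by blast
  have "\<exists>W K. open W \<and> compact K \<and> p \<in> W \<and> W \<subseteq> K"
    using lc unfolding locally_compact_space_def by simp
  then obtain W K where "open W" "compact K" "p \<in> W" "W \<subseteq> K"
    by blast
  moreover have "disjoint_family_on (\<lambda>x. (+) x ` (W \<inter> V)) L"
    using disj unfolding disjoint_family_on_def by blast
  ultimately show thesis
    using V \<open>p \<in> V\<close> by (intro that[of "W \<inter> V" K]) auto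
qed

lemma sums_subset_K_boundary:
  "{a + k | a k. a \<in> A \<and> k \<in> K} \<subseteq> A \<union> K_boundary K A"
proof -
  have "{a + k | a k. a \<in> A \<and> k \<in> K} - interior A \<subseteq> K_boundary K A"
    unfolding K_boundary_def by (rule Un_upper1)
  with interior_subset[of A] show ?thesis by blast
qed

lemma K_boundary_subset_sums:
  "K_boundary K A \<subseteq> {a + k | a k. a \<in> A \<and> k \<in> K} \<union> A"
  unfolding K_boundary_def by (intro Un_mono Diff_subset Int_lower2)

lemma card_inter_mult_measure_le:
  fixes vol :: "'a::{topological_ab_group_add, t2_space, first_countable_topology} measure"
  assumes haar: "haar_measure vol" and D: "open D" "D \<subseteq> K" "compact K"
    and disj: "disjoint_family_on (\<lambda>x. (+) x ` D) L" and A: "compact A"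
  shows "real (card (L \<inter> A)) * measure vol D \<le> measure vol A + measure vol (K_boundary K A)"
proof (cases "finite (L \<inter> A)")
  case False
  then show ?thesis by simp
next
  case True
  have sets_vol: "sets vol = sets borel"
    using haar by (rule sets_haar_measure)
  have translate: "emeasure vol ((+) x ` D) = emeasure vol D" for x
    using haar borel_open[OF D(1)] by (rule emeasure_haar_measure_translation)
  have translate_sets: "(+) x ` D \<in> sets vol" for x
    using D(1) sets_vol by (simp add: open_translation_group)
  have "D \<in> fmeasurable vol"
    using haar D by (intro haar_measure_fmeasurable) auto
  then have translate_finite: "emeasure vol ((+) x ` D) \<noteq> \<infinity>" for x
    by (simp add: translate fmeasurable_def less_top)
  have A_sets: "A \<in> sets vol" and boundary_sets: "K_boundary K A \<in> sets vol"
    using A D(3) sets_vol by (auto intro: borel_closed compact_imp_closed K_boundary_borel)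
  have "real (card (L \<inter> A)) * measure vol D = (\<Sum>x\<in>L \<inter> A. measure vol ((+) x ` D))"
    by (simp add: measure_def translate)
  also have "\<dots> = measure vol (\<Union>x\<in>L \<inter> A. (+) x ` D)"
    using True translate_sets translate_finite disjoint_family_on_mono[OF Int_lower1 disj]
    by (intro measure_finite_Union[symmetric]) auto
  also have "\<dots> \<le> measure vol (A \<union> K_boundary K A)"
  proof (rule measure_mono_fmeasurable)
    have "(\<Union>x\<in>L \<inter> A. (+) x ` D) \<subseteq> {a + k | a k. a \<in> A \<and> k \<in> K}"
      using D(2) by blast
    then show "(\<Union>x\<in>L \<inter> A. (+) x ` D) \<subseteq> A \<union> K_boundary K A"
      using sums_subset_K_boundary by (rule order_trans)
    show "(\<Union>x\<in>L \<inter> A. (+) x ` D) \<in> sets vol"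
      using True translate_sets by blast
    have "A \<union> K_boundary K A \<in> sets borel"
      using A_sets boundary_sets sets_vol by auto
    moreover have "A \<union> K_boundary K A \<subseteq> {a + k | a k. a \<in> A \<and> k \<in> K} \<union> A"
      using K_boundary_subset_sums by blast
    moreover have "compact ({a + k | a k. a \<in> A \<and> k \<in> K} \<union> A)"
      using compact_sums_group[OF A D(3)] A by (rule compact_Un)
    ultimately show "A \<union> K_boundary K A \<in> fmeasurable vol"
      by (rule haar_measure_fmeasurable[OF haar])
  qed
  also have "\<dots> \<le> measure vol A + measure vol (K_boundary K A)"
    using A_sets boundary_sets by (rule measure_Un_le)
  finally show ?thesis .
qed

lemma van_Hove_measure_pos:
  assumes "haar_measure vol" "van_Hove vol A"
  shows "0 < measure vol (A n)"
proof -
  have "compact (A n)" "0 < emeasure vol (A n)"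
    using assms(2) by (auto simp: van_Hove_def)
  moreover have "A n \<in> fmeasurable vol"
    using assms(1) \<open>compact (A n)\<close> by (intro haar_measure_fmeasurable borel_closed compact_imp_closed) auto
  ultimately show ?thesis
    by (simp add: emeasure_eq_measure2)
qed

lemma uniformly_discrete_density_bounded:
  fixes vol :: "'a::{topological_ab_group_add, t2_space, first_countable_topology} measure"
  assumes lc: "locally_compact_space (euclidean :: 'a topology)"
    and haar: "haar_measure vol" and ud: "uniformly_discrete L" and vH: "van_Hove vol A"
  shows "\<exists>b. \<forall>\<^sub>F n in sequentially. real (card (L \<inter> A n)) / measure vol (A n) \<le> b"
proof -
  obtain D K where D: "open D" "D \<noteq> {}" "D \<subseteq> K" "compact K"
    and disj: "disjoint_family_on (\<lambda>x. (+) x ` D) L"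
    using lc ud by (rule uniformly_discrete_disjoint_translates_compact)
  have "0 < measure vol D"
    using haar D by (rule haar_measure_pos)
  have "(\<lambda>n. measure vol (K_boundary K (A n)) / measure vol (A n)) \<longlonglongrightarrow> 0"
    using vH D(4) unfolding van_Hove_def by blast
  then have "\<forall>\<^sub>F n in sequentially. measure vol (K_boundary K (A n)) / measure vol (A n) < 1"
    by (rule order_tendstoD) simp
  then have "\<forall>\<^sub>F n in sequentially. real (card (L \<inter> A n)) / measure vol (A n) \<le> 2 / measure vol D"
  proof (rule eventually_mono)
    fix n
    assume "measure vol (K_boundary K (A n)) / measure vol (A n) < 1"
    moreover have "0 < measure vol (A n)"
      using haar vH by (rule van_Hove_measure_pos)
    moreover have "real (card (L \<inter> A n)) * measure vol D \<le> measure vol (A n) + measure vol (K_boundary K (A n))"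
      using haar D(1,3,4) disj vH by (intro card_inter_mult_measure_le) (auto simp: van_Hove_def)
    ultimately show "real (card (L \<inter> A n)) / measure vol (A n) \<le> 2 / measure vol D"
      using \<open>0 < measure vol D\<close> by (simp add: field_simps)
  qed
  then show ?thesis ..
qed

lemma positive_density_bounds:
  fixes vol :: "'a::{topological_ab_group_add, t2_space, first_countable_topology} measure"
  assumes lc: "locally_compact_space (euclidean :: 'a topology)"
    and haar: "haar_measure vol" and ud: "uniformly_discrete L" and vH: "van_Hove vol A"
    and dens: "liminf (\<lambda>n. ereal (real (card (L \<inter> A n)) / measure vol (A n))) > 0"
  obtains a b where "0 < a" "\<forall>\<^sub>F n in sequentially. real (card (L \<inter> A n)) / measure vol (A n) \<in> {a..b}"
proof -
  obtain a where "0 < ereal a" and "ereal a < liminf (\<lambda>n. ereal (real (card (L \<inter> A n)) / measure vol (A n)))"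
    using ereal_dense2[OF dens] by blast
  then have "0 < a" and lower: "\<forall>\<^sub>F n in sequentially. a < real (card (L \<inter> A n)) / measure vol (A n)"
    by (auto dest: less_LiminfD)
  obtain b where upper: "\<forall>\<^sub>F n in sequentially. real (card (L \<inter> A n)) / measure vol (A n) \<le> b"
    using uniformly_discrete_density_bounded[OF lc haar ud vH] ..
  have "\<forall>\<^sub>F n in sequentially. real (card (L \<inter> A n)) / measure vol (A n) \<in> {a..b}"
    using eventually_conj[OF lower upper] by (rule eventually_mono) auto
  with \<open>0 < a\<close> show thesis
    by (rule that)
qed

lemma gamma_dens_eq_scale_gamma_count:
  assumes "card F \<noteq> 0"
  shows "gamma_dens vol A F = scale_measure (ennreal (real (card F) / measure vol A)) (gamma_count F)"
proof -
  have "1 / measure vol A = real (card F) / measure vol A * (1 / real (card F))"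
    using assms by simp
  then show ?thesis
    unfolding gamma_dens_def gamma_count_def by (simp add: ennreal_mult[symmetric])
qed

lemma gamma_count_eq_scale_gamma_dens:
  assumes "measure vol A \<noteq> 0"
  shows "gamma_count F = scale_measure (ennreal (measure vol A / real (card F))) (gamma_dens vol A F)"
proof -
  have "1 / real (card F) = measure vol A / real (card F) * (1 / measure vol A)"
    using assms by simp
  then show ?thesis
    unfolding gamma_dens_def gamma_count_def by (simp add: ennreal_mult[symmetric])
qed

lemma integral_scale_measure:
  fixes f :: "'a \<Rightarrow> real"
  assumes "0 \<le> r"
  shows "integral\<^sup>L (scale_measure (ennreal r) M) f = r * integral\<^sup>L M f"
proof (cases "f \<in> borel_measurable M")
  case True
  have "scale_measure (ennreal r) M = density M (\<lambda>_. ennreal r)"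
    by (rule measure_eqI) (simp_all add: emeasure_density nn_integral_cmult_indicator)
  then show ?thesis
    using True assms by (simp add: integral_density)
next
  case False
  then have "\<not> integrable (scale_measure (ennreal r) M) f" "\<not> integrable M f"
    by (auto simp: measurable_cong_sets[OF sets_scale_measure refl])
  then show ?thesis
    by (simp add: not_integrable_integral_eq)
qed

lemma radon_scale_measure:
  assumes "radon M"
  shows "radon (scale_measure (ennreal r) M)"
  using assms by (simp add: radon_def ennreal_mult_less_top)

lemma frequently_close_iff_filter:
  fixes I :: "nat \<Rightarrow> 'f \<Rightarrow> real"
  shows "(\<forall>Fs. finite Fs \<and> Fs \<subseteq> S \<longrightarrow> (\<forall>\<epsilon>>0. \<forall>N. \<exists>n\<ge>N. \<forall>f\<in>Fs. \<bar>I n f - J f\<bar> < \<epsilon>)) \<longleftrightarrow>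
         (\<exists>G. G \<noteq> bot \<and> G \<le> sequentially \<and> (\<forall>f\<in>S. ((\<lambda>n. I n f) \<longlongrightarrow> J f) G))"
    (is "?close \<longleftrightarrow> ?filter")
proof
  assume close: ?close
  define B where "B = {(Fs, \<epsilon>, N :: nat). finite Fs \<and> Fs \<subseteq> S \<and> (\<epsilon>::real) > 0}"
  define E where "E = (\<lambda>(Fs, \<epsilon>, N). {n. N \<le> n \<and> (\<forall>f\<in>Fs. \<bar>I n f - J f\<bar> < \<epsilon>)})"
  define G where "G = (INF b\<in>B. principal (E b))"
  have eventually_G: "eventually P G \<longleftrightarrow> (\<exists>b\<in>B. \<forall>n\<in>E b. P n)" for P
    unfolding G_def
  proof (subst eventually_INF_base)
    have "({}, 1, 0) \<in> B" by (simp add: B_def)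
    then show "B \<noteq> {}" by blast
    fix a b assume "a \<in> B" "b \<in> B"
    then show "\<exists>x\<in>B. principal (E x) \<le> inf (principal (E a)) (principal (E b))"
      by (cases a, cases b,
          intro bexI[of _ "(fst a \<union> fst b, min (fst (snd a)) (fst (snd b)), max (snd (snd a)) (snd (snd b)))"])
        (auto simp: B_def E_def)
  qed (simp add: eventually_principal)
  have "G \<noteq> bot"
    using close by (auto simp: trivial_limit_def eventually_G B_def E_def)
  moreover have "G \<le> sequentially"
  proof (rule filter_leI)
    fix P assume "eventually P sequentially"
    then obtain N where "\<forall>n\<ge>N. P n" by (auto simp: eventually_sequentially)
    then show "eventually P G"
      unfolding eventually_G by (intro bexI[of _ "({}, 1, N)"]) (auto simp: B_def E_def)
  qed
  moreover have "((\<lambda>n. I n f) \<longlongrightarrow> J f) G" if "f \<in> S" for f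
    unfolding tendsto_iff dist_real_def eventually_G
    using that by (intro allI impI bexI[of _ "({f}, _, 0)"]) (auto simp: B_def E_def)
  ultimately show ?filter by blast
next
  assume ?filter
  then obtain G where G: "G \<noteq> bot" "G \<le> sequentially" "\<forall>f\<in>S. ((\<lambda>n. I n f) \<longlongrightarrow> J f) G"
    by blast
  show ?close
  proof (intro allI impI)
    fix Fs \<epsilon> N assume Fs: "finite Fs \<and> Fs \<subseteq> S" and "(\<epsilon>::real) > 0"
    then have "\<forall>\<^sub>F n in G. \<forall>f\<in>Fs. \<bar>I n f - J f\<bar> < \<epsilon>"
      using G(3) by (simp add: eventually_ball_finite_distrib tendsto_iff dist_real_def subset_eq)
    moreover have "\<forall>\<^sub>F n in G. N \<le> n"
      using G(2) by (rule filter_leD) (rule eventually_ge_at_top)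
    ultimately show "\<exists>n\<ge>N. \<forall>f\<in>Fs. \<bar>I n f - J f\<bar> < \<epsilon>"
      using eventually_happens'[OF G(1)] eventually_conj by blast
  qed
qed

lemma vague_cluster_point_iff_filter:
  "vague_cluster_point mus mu \<longleftrightarrow> radon mu \<and>
     (\<exists>G. G \<noteq> bot \<and> G \<le> sequentially \<and>
        (\<forall>f\<in>Cc. ((\<lambda>n. integral\<^sup>L (mus n) f) \<longlongrightarrow> integral\<^sup>L mu f) G))"
  unfolding vague_cluster_point_def frequently_close_iff_filter ..

lemma compact_imp_cluster_point_filtercomap:
  assumes "compact K" "G \<noteq> bot" "\<forall>\<^sub>F n in G. c n \<in> K"
  obtains C where "C \<in> K" "inf G (filtercomap c (nhds C)) \<noteq> bot"
proof -
  have "filtermap c G \<noteq> bot" "\<forall>\<^sub>F x in filtermap c G. x \<in> K"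
    using assms(2,3) by (simp_all add: filtermap_bot_iff eventually_filtermap)
  then obtain C where C: "C \<in> K" "inf (nhds C) (filtermap c G) \<noteq> bot"
    using assms(1) unfolding compact_filter by blast
  have "inf G (filtercomap c (nhds C)) \<noteq> bot"
  proof
    assume "inf G (filtercomap c (nhds C)) = bot"
    then obtain P R where "eventually P G" "eventually R (nhds C)" "\<And>n. P n \<Longrightarrow> R (c n) \<Longrightarrow> False"
      unfolding trivial_limit_def eventually_inf eventually_filtercomap by blast
    moreover from \<open>eventually P G\<close> have "\<forall>\<^sub>F x in filtermap c G. \<exists>n. P n \<and> c n = x"
      unfolding eventually_filtermap by (rule eventually_mono) blast
    ultimately have "inf (nhds C) (filtermap c G) = bot"
      unfolding trivial_limit_def eventually_inf by blast
    with C(2) show False ..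
  qed
  with C(1) show thesis by (rule that)
qed

lemma vague_cluster_point_rescale:
  assumes mu: "vague_cluster_point mus mu"
    and K: "compact K" "K \<subseteq> {0..}"
    and c: "\<forall>\<^sub>F n in sequentially. c n \<in> K"
    and nus: "\<forall>\<^sub>F n in sequentially. nus n = scale_measure (ennreal (c n)) (mus n)"
  shows "\<exists>C\<in>K. vague_cluster_point nus (scale_measure (ennreal C) mu)"
proof -
  obtain G where "radon mu" "G \<noteq> bot" "G \<le> sequentially"
    and lim_mus: "\<And>f. f \<in> Cc \<Longrightarrow> ((\<lambda>n. integral\<^sup>L (mus n) f) \<longlongrightarrow> integral\<^sup>L mu f) G"
    using mu unfolding vague_cluster_point_iff_filter by blast
  obtain C where "C \<in> K" and proper: "inf G (filtercomap c (nhds C)) \<noteq> bot"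
    using compact_imp_cluster_point_filtercomap[OF K(1) \<open>G \<noteq> bot\<close> filter_leD[OF \<open>G \<le> sequentially\<close> c]] .
  \<comment> \<open>Along H the scalars c n converge to C while the integrals still converge along G.\<close>
  define H where "H = inf G (filtercomap c (nhds C))"
  have "H \<le> sequentially"
    using \<open>G \<le> sequentially\<close> unfolding H_def by (simp add: le_infI1)
  have "((\<lambda>n. integral\<^sup>L (nus n) f) \<longlongrightarrow> integral\<^sup>L (scale_measure (ennreal C) mu) f) H"
    if "f \<in> Cc" for f
  proof -
    have "(c \<longlongrightarrow> C) H"
      unfolding H_def by (rule filterlim_mono[OF filterlim_filtercomap order_refl inf_le2])
    moreover have "((\<lambda>n. integral\<^sup>L (mus n) f) \<longlongrightarrow> integral\<^sup>L mu f) H"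
      unfolding H_def by (rule tendsto_mono[OF inf_le1 lim_mus[OF that]])
    ultimately have "((\<lambda>n. c n * integral\<^sup>L (mus n) f) \<longlongrightarrow> C * integral\<^sup>L mu f) H"
      by (rule tendsto_mult)
    moreover have "\<forall>\<^sub>F n in H. integral\<^sup>L (nus n) f = c n * integral\<^sup>L (mus n) f"
      using filter_leD[OF \<open>H \<le> sequentially\<close> eventually_conj[OF c nus]]
      by (rule eventually_mono) (use K(2) in \<open>auto simp: integral_scale_measure\<close>)
    moreover have "integral\<^sup>L (scale_measure (ennreal C) mu) f = C * integral\<^sup>L mu f"
      using \<open>C \<in> K\<close> K(2) by (auto intro: integral_scale_measure)
    ultimately show ?thesis
      by (simp add: tendsto_cong)
  qed
  then have "vague_cluster_point nus (scale_measure (ennreal C) mu)"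
    unfolding vague_cluster_point_iff_filter
    using \<open>radon mu\<close> proper \<open>H \<le> sequentially\<close> by (auto simp: radon_scale_measure H_def)
  with \<open>C \<in> K\<close> show ?thesis ..
qed

theorem theorem3p10:
  fixes vol :: "'a::{topological_ab_group_add, t2_space, second_countable_topology} measure"
    and L :: "'a set"
    and A :: "nat \<Rightarrow> 'a set"
  assumes lc: "locally_compact_space (euclidean :: 'a topology)"
    and haar: "haar_measure vol"
    and ud: "uniformly_discrete L"
    and vH: "van_Hove vol A"
    and dens: "liminf (\<lambda>n. ereal (real (card (L \<inter> A n)) / measure vol (A n))) > 0"
  shows "(\<forall>gc. vague_cluster_point (\<lambda>n. gamma_count (L \<inter> A n)) gc \<longrightarrow>
            (\<exists>C::real. 0 < C \<and> (\<exists>gd. vague_cluster_point (\<lambda>n. gamma_dens vol (A n) (L \<inter> A n)) gd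
                \<and> gd = scale_measure (ennreal C) gc)))
       \<and> (\<forall>gd. vague_cluster_point (\<lambda>n. gamma_dens vol (A n) (L \<inter> A n)) gd \<longrightarrow>
            (\<exists>D::real. 0 < D \<and> (\<exists>gc. vague_cluster_point (\<lambda>n. gamma_count (L \<inter> A n)) gc
                \<and> gc = scale_measure (ennreal D) gd)))"
proof -
  define c where "c n = real (card (L \<inter> A n)) / measure vol (A n)" for n
  obtain a b where "0 < a" and c_bounds: "\<forall>\<^sub>F n in sequentially. c n \<in> {a..b}"
    using positive_density_bounds[OF lc haar ud vH dens] unfolding c_def by blast
  have pos: "{a..b} \<subseteq> {0<..}" "inverse ` {a..b} \<subseteq> {0<..}"
    and nonneg: "{a..b} \<subseteq> {0..}" "inverse ` {a..b} \<subseteq> {0..}"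
    using \<open>0 < a\<close> by auto
  have compact: "compact {a..b}" "compact (inverse ` {a..b})"
    using pos(1) by (auto intro!: compact_continuous_image continuous_intros)
  have "\<forall>\<^sub>F n in sequentially. 0 < c n"
    using c_bounds by (rule eventually_mono) (use \<open>0 < a\<close> in auto)
  then have dens_eq: "\<forall>\<^sub>F n in sequentially.
      gamma_dens vol (A n) (L \<inter> A n) = scale_measure (ennreal (c n)) (gamma_count (L \<inter> A n))"
    by (rule eventually_mono) (auto simp: c_def zero_less_divide_iff intro!: gamma_dens_eq_scale_gamma_count)
  have "gamma_count (L \<inter> A n) = scale_measure (ennreal (inverse (c n))) (gamma_dens vol (A n) (L \<inter> A n))" for n
    using van_Hove_measure_pos[OF haar vH, of n] unfolding c_def inverse_divide
    by (intro gamma_count_eq_scale_gamma_dens) simp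
  then have count_eq: "\<forall>\<^sub>F n in sequentially.
      gamma_count (L \<inter> A n) = scale_measure (ennreal (inverse (c n))) (gamma_dens vol (A n) (L \<inter> A n))"
    by (simp add: always_eventually)
  have inverse_bounds: "\<forall>\<^sub>F n in sequentially. inverse (c n) \<in> inverse ` {a..b}"
    using c_bounds by (rule eventually_mono) blast
  show ?thesis
    using vague_cluster_point_rescale[OF _ compact(1) nonneg(1) c_bounds dens_eq]
      vague_cluster_point_rescale[OF _ compact(2) nonneg(2) inverse_bounds count_eq] pos
    by blast
qed

end
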